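(* Let $C:\mathbb{R}^n\to\mathbb{R}$ be convex, increasing and $\mathbf 1$-invariant. Then $\varphi:\mathbb{R}^n\to\mathbb{R}$, $\varphi(\vec q)=-C(-\vec q)$, is concave and increasing. Furthermore $\mathsf{ValTrades}_\varphi=\mathsf{ValTrades}'_C$, i.e. for every nonempty history $h$, \[\{\vec r\in\mathbb{R}^n\mid\varphi(\vec q_h+\vec r)=\varphi(\vec q_h)\}=\{\vec r+\alpha\mathbf 1\mid \vec r\in\mathbb{R}^n,\ \alpha=C(-\vec q_h-\vec r)-C(-\vec q_h)\}.\]
   Context: $\mathbf 1=(1,\dots,1)\in\mathbb{R}^n$. $C$ is $\mathbf 1$-invariant if $C(\vec q+\alpha\mathbf 1)=C(\vec q)+\alpha$ for all $\vec q,\alpha$; a function is increasing if $f(\vec q)>f(\vec q')$ whenever $\vec q\succeq\vec q'$ coordinatewise and $\vec q\neq\vec q'$. A history $h$ is a finite list of vectors in $\mathbb{R}^n$ and $\vec q_h$ is their sum. $\mathsf{ValTrades}_\varphi(h)=\{\vec r\mid\varphi(\vec q_h+\vec r)=\varphi(\vec q_h)\}$ is the constant-function market maker (CFMM) for potential $\varphi$, and $\mathsf{ValTrades}'_C(h)=\{\vec r+\alpha\mathbf 1\mid\vec r\in\mathbb{R}^n,\ \alpha=C(-\vec q_h-\vec r)-C(-\vec q_h)\}$ is the cashless cost-function market maker for $C$. *)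

theory Defs
  imports "HOL-Analysis.Analysis"
begin

definition ones :: "real ^ 'n" where
  "ones = (\<chi> i. 1)"

definition dominates :: "real ^ 'n \<Rightarrow> real ^ 'n \<Rightarrow> bool" where
  "dominates q q' \<longleftrightarrow> (\<forall>i. q' $ i \<le> q $ i)"

definition one_invariant :: "(real ^ 'n \<Rightarrow> real) \<Rightarrow> bool" where
  "one_invariant C \<longleftrightarrow> (\<forall>q \<alpha>. C (q + \<alpha> *\<^sub>R ones) = C q + \<alpha>)"

definition increasing_fn :: "(real ^ 'n \<Rightarrow> real) \<Rightarrow> bool" where
  "increasing_fn f \<longleftrightarrow> (\<forall>q q'. dominates q q' \<and> q \<noteq> q' \<longrightarrow> f q > f q')"

definition qvec :: "(real ^ 'n) list \<Rightarrow> real ^ 'n" where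
  "qvec h = sum_list h"

text \<open>Constant-function market maker for potential phi.\<close>
definition ValTrades :: "(real ^ 'n \<Rightarrow> real) \<Rightarrow> (real ^ 'n) list \<Rightarrow> (real ^ 'n) set" where
  "ValTrades \<phi> h = {r. \<phi> (qvec h + r) = \<phi> (qvec h)}"

text \<open>Cashless cost-function market maker for cost function C.\<close>
definition ValTrades' :: "(real ^ 'n \<Rightarrow> real) \<Rightarrow> (real ^ 'n) list \<Rightarrow> (real ^ 'n) set" where
  "ValTrades' C h = {r + \<alpha> *\<^sub>R ones | r \<alpha>. \<alpha> = C (- qvec h - r) - C (- qvec h)}"

end

theory Submission
  imports Defs
begin

text \<open>A trade s keeps \<phi> level at q_h exactly when it keeps C level at q = -q_h. By
  1-invariance, a cost-function trade r + \<alpha>1 with \<alpha> = C(q - r) - C(q) moves C to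
  C(q - r) - \<alpha> = C(q); conversely every such level-preserving trade s is of this form with
  r = s and \<alpha> = 0.\<close>

lemma convex_on_reflect:
  fixes f :: "'a::real_vector \<Rightarrow> real"
  assumes "convex_on UNIV f"
  shows "convex_on UNIV (\<lambda>x. f (- x))"
proof (rule convex_onI)
  fix t :: real and x y :: 'a
  assume t: "0 < t" "t < 1"
  have "f (- ((1 - t) *\<^sub>R x + t *\<^sub>R y)) = f ((1 - t) *\<^sub>R (- x) + t *\<^sub>R (- y))"
    by (simp add: algebra_simps)
  also have "\<dots> \<le> (1 - t) * f (- x) + t * f (- y)"
    using assms t by (intro convex_onD) auto
  finally show "f (- ((1 - t) *\<^sub>R x + t *\<^sub>R y)) \<le> (1 - t) * f (- x) + t * f (- y)" .
qed simp

lemma concave_on_neg_reflect: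
  fixes f :: "'a::real_vector \<Rightarrow> real"
  assumes "convex_on UNIV f"
  shows "concave_on UNIV (\<lambda>x. - f (- x))"
  using convex_on_reflect[OF assms] by (simp add: convex_on_iff_concave)

lemma dominates_uminus_iff: "dominates (- q') (- q) \<longleftrightarrow> dominates q q'"
  by (simp add: dominates_def)

lemma increasing_fn_neg_reflect:
  fixes C :: "real ^ 'n \<Rightarrow> real"
  assumes "increasing_fn C"
  shows "increasing_fn (\<lambda>q. - C (- q))"
  unfolding increasing_fn_def
proof (intro allI impI)
  fix q q' :: "real ^ 'n"
  assume "dominates q q' \<and> q \<noteq> q'"
  then have "dominates (- q') (- q) \<and> - q' \<noteq> - q"
    by (auto simp: dominates_uminus_iff)
  with assms have "C (- q) < C (- q')"
    unfolding increasing_fn_def by blast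
  then show "- C (- q') < - C (- q)"
    by simp
qed

lemma one_invariant_diff:
  assumes "one_invariant C"
  shows "C (q - \<alpha> *\<^sub>R ones) = C q - \<alpha>"
  using assms[unfolded one_invariant_def, rule_format, of q "- \<alpha>"] by simp

lemma ValTrades'_eq_level_set:
  assumes "one_invariant C"
  shows "ValTrades' C h = {s. C (- qvec h - s) = C (- qvec h)}"
proof (intro set_eqI iffI)
  fix s
  assume "s \<in> ValTrades' C h"
  then obtain r \<alpha> where s: "s = r + \<alpha> *\<^sub>R ones"
    and \<alpha>: "\<alpha> = C (- qvec h - r) - C (- qvec h)"
    unfolding ValTrades'_def by blast
  have "C (- qvec h - s) = C ((- qvec h - r) - \<alpha> *\<^sub>R ones)"
    using s by (simp add: algebra_simps)
  also have "\<dots> = C (- qvec h)"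
    using \<alpha> by (simp add: one_invariant_diff[OF assms])
  finally show "s \<in> {s. C (- qvec h - s) = C (- qvec h)}" by simp
next
  fix s
  assume "s \<in> {s. C (- qvec h - s) = C (- qvec h)}"
  then have "s = s + 0 *\<^sub>R ones \<and> 0 = C (- qvec h - s) - C (- qvec h)"
    by simp
  then show "s \<in> ValTrades' C h"
    unfolding ValTrades'_def by blast
qed

lemma ValTrades_neg_reflect_eq_ValTrades':
  fixes C :: "real ^ 'n \<Rightarrow> real"
  assumes "one_invariant C"
  shows "ValTrades (\<lambda>q. - C (- q)) h = ValTrades' C h"
proof -
  have "- (qvec h + s) = - qvec h - s" for s :: "real ^ 'n"
    by simp
  then show ?thesis
    unfolding ValTrades_def ValTrades'_eq_level_set[OF assms] by simp
qed

theorem theorem3p3: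
  fixes C :: "real ^ 'n \<Rightarrow> real"
  assumes "convex_on UNIV C"
    and "increasing_fn C"
    and "one_invariant C"
  defines "\<phi> \<equiv> (\<lambda>q. - C (- q))"
  shows "concave_on UNIV \<phi> \<and> increasing_fn \<phi> \<and>
         (\<forall>h. h \<noteq> [] \<longrightarrow> ValTrades \<phi> h = ValTrades' C h)"
  unfolding \<phi>_def
  using concave_on_neg_reflect[OF assms(1)] increasing_fn_neg_reflect[OF assms(2)]
    ValTrades_neg_reflect_eq_ValTrades'[OF assms(3)]
  by blast

end
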